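(* Let $n\ge1$ and let $A\subseteq\mathbb{R}^n$ (Euclidean norm) be a nonempty approximately convex set with $\mathcal{H}(A,\operatorname{Co}(A))\ge\log_2 n-1$. Then for every integer $j$ with $1\le j\le n$, $$\operatorname{diam}(A)\ge\frac{(\log_2 n-1-\lceil\log_2 j\rceil)\sqrt j}{\sqrt{n-j+1}}\,\sqrt n .$$ In particular $\operatorname{diam}(A)\ge0.7525\sqrt n$ for all $n\ge20$, and $\operatorname{diam}(A)\ge0.768\sqrt n$ for all sufficiently large $n$.
   Context: A set $A$ is approximately convex if $d(tx+(1-t)y,A)\le1$ for all $x,y\in A$, $t\in[0,1]$, where $d(x,A)=\inf_{a\in A}\|x-a\|$. $\mathcal{H}$ is the Hausdorff distance, $\operatorname{Co}$ the convex hull, $\operatorname{diam}(A)=\sup\{\|x-y\|:x,y\in A\}$, and $\lceil x\rceil$ the least integer $\ge x$. *)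

theory Defs
  imports "HOL-Analysis.Analysis"
begin

text \<open>Euclidean space R^n is represented concretely as the functions nat => real
  vanishing outside the coordinates 0..n-1 (so that the dimension n can be
  quantified inside a formula).\<close>

definition Rn :: "nat \<Rightarrow> (nat \<Rightarrow> real) set" where
  "Rn n = {x. \<forall>i\<ge>n. x i = 0}"

definition enorm :: "nat \<Rightarrow> (nat \<Rightarrow> real) \<Rightarrow> real" where
  "enorm n x = sqrt (\<Sum>i<n. (x i)\<^sup>2)"

definition edist :: "nat \<Rightarrow> (nat \<Rightarrow> real) \<Rightarrow> (nat \<Rightarrow> real) \<Rightarrow> real" where
  "edist n x y = enorm n (\<lambda>i. x i - y i)"

definition cmb :: "real \<Rightarrow> (nat \<Rightarrow> real) \<Rightarrow> (nat \<Rightarrow> real) \<Rightarrow> (nat \<Rightarrow> real)" where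
  "cmb t x y = (\<lambda>i. t * x i + (1 - t) * y i)"

definition convexR :: "(nat \<Rightarrow> real) set \<Rightarrow> bool" where
  "convexR S \<longleftrightarrow> (\<forall>x\<in>S. \<forall>y\<in>S. \<forall>t\<in>{0..1}. cmb t x y \<in> S)"

definition Co :: "(nat \<Rightarrow> real) set \<Rightarrow> (nat \<Rightarrow> real) set" where
  "Co A = convexR hull A"

definition setd :: "nat \<Rightarrow> (nat \<Rightarrow> real) \<Rightarrow> (nat \<Rightarrow> real) set \<Rightarrow> real" where
  "setd n x A = (INF a\<in>A. edist n x a)"

definition approx_convex :: "nat \<Rightarrow> (nat \<Rightarrow> real) set \<Rightarrow> bool" where
  "approx_convex n A \<longleftrightarrow> (\<forall>x\<in>A. \<forall>y\<in>A. \<forall>t\<in>{0..1}. setd n (cmb t x y) A \<le> 1)"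

text \<open>Hausdorff distance and diameter, valued in the extended reals
  (they are +infinity for unbounded sets).\<close>
definition hausd :: "nat \<Rightarrow> (nat \<Rightarrow> real) set \<Rightarrow> (nat \<Rightarrow> real) set \<Rightarrow> ereal" where
  "hausd n A B = max (SUP a\<in>A. ereal (setd n a B)) (SUP b\<in>B. ereal (setd n b A))"

definition diam :: "nat \<Rightarrow> (nat \<Rightarrow> real) set \<Rightarrow> ereal" where
  "diam n A = (SUP p\<in>A \<times> A. ereal (edist n (fst p) (snd p)))"

end

theory Submission
  imports Defs
begin

text \<open>Let \<open>D = diam A\<close>. A point \<open>x\<close> of \<open>Co A\<close> is a finite convex combination
  \<open>\<Sum> w a * a\<close> of points of \<open>A\<close>. The mean of \<open>j\<close> independent samples drawn with
  the weights \<open>w\<close> has expected squared distance to \<open>x\<close> equal to the variance over \<open>j\<close>,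
  and the variance is at most \<open>D\<^sup>2 / 2\<close>; so some barycenter of \<open>j\<close> points of \<open>A\<close>
  lies within \<open>D / sqrt (2 j)\<close> of \<open>x\<close>. Halving the point set repeatedly, approximate
  convexity puts that barycenter within \<open>\<lceil>log 2 j\<rceil>\<close> of \<open>A\<close>. Hence
  \<open>hausd A (Co A) \<le> \<lceil>log 2 j\<rceil> + D / sqrt (2 j)\<close> for every \<open>j \<ge> 1\<close>, and the stated
  bounds follow by elementary estimates; \<open>0.768\<close> comes from \<open>j = 2 ^ k\<close> with
  \<open>2 ^ (k + 3) \<le> n < 2 ^ (k + 4)\<close>.\<close>

lemma enorm_nonneg: "0 \<le> enorm n x"
  by (simp add: enorm_def sum_nonneg)

lemma power2_enorm: "(enorm n x)\<^sup>2 = (\<Sum>i<n. (x i)\<^sup>2)"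
  by (simp add: enorm_def sum_nonneg)

lemma enorm_eq_L2_set: "enorm n x = L2_set x {..<n}"
  by (simp add: enorm_def L2_set_def)

lemma edist_nonneg: "0 \<le> edist n x y"
  by (simp add: edist_def enorm_nonneg)

lemma edist_self [simp]: "edist n x x = 0"
  by (simp add: edist_def enorm_def)

lemma edist_triangle: "edist n x z \<le> edist n x y + edist n y z"
  using L2_set_triangle_ineq[of "\<lambda>i. x i - y i" "\<lambda>i. y i - z i" "{..<n}"]
  by (simp add: edist_def enorm_eq_L2_set)

lemma edist_cmb_le:
  assumes "t \<in> {0..1}"
  shows "edist n (cmb t x1 x2) (cmb t y1 y2) \<le> t * edist n x1 y1 + (1 - t) * edist n x2 y2"
proof -
  have "edist n (cmb t x1 x2) (cmb t y1 y2)
        = L2_set (\<lambda>i. t * (x1 i - y1 i) + (1 - t) * (x2 i - y2 i)) {..<n}"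
    by (simp add: edist_def enorm_eq_L2_set cmb_def algebra_simps)
  also have "\<dots> \<le> L2_set (\<lambda>i. t * (x1 i - y1 i)) {..<n} + L2_set (\<lambda>i. (1 - t) * (x2 i - y2 i)) {..<n}"
    by (rule L2_set_triangle_ineq)
  also have "\<dots> = t * edist n x1 y1 + (1 - t) * edist n x2 y2"
    using assms by (simp add: L2_set_right_distrib edist_def enorm_eq_L2_set)
  finally show ?thesis .
qed

lemma setd_le_edist: "a \<in> A \<Longrightarrow> setd n x A \<le> edist n x a"
  unfolding setd_def by (rule cInf_lower) (auto intro: bdd_belowI[of _ 0] simp: edist_nonneg)

lemma setd_lessE:
  assumes "A \<noteq> {}" "setd n x A < c"
  obtains a where "a \<in> A" "edist n x a < c"
  using assms cInf_lessD[of "edist n x ` A" c] unfolding setd_def by auto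

lemma setd_le_edist_plus_setd:
  assumes "A \<noteq> {}"
  shows "setd n x A \<le> edist n x y + setd n y A"
proof -
  have "setd n x A - edist n x y \<le> setd n y A"
    unfolding setd_def[of n y]
  proof (rule cINF_greatest[OF assms])
    fix a assume "a \<in> A"
    then have "setd n x A \<le> edist n x y + edist n y a"
      using setd_le_edist edist_triangle order_trans by blast
    then show "setd n x A - edist n x y \<le> edist n y a" by simp
  qed
  then show ?thesis by simp
qed

lemma setd_cmb_le:
  assumes "approx_convex n A" "A \<noteq> {}" "t \<in> {0..1}"
    and "setd n x1 A \<le> r" "setd n x2 A \<le> r"
  shows "setd n (cmb t x1 x2) A \<le> r + 1"
proof (rule field_le_epsilon)
  fix e :: real assume "0 < e"
  obtain a1 where a1: "a1 \<in> A" "edist n x1 a1 < r + e"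
    using setd_lessE[OF \<open>A \<noteq> {}\<close>, of n x1 "r + e"] assms(4) \<open>0 < e\<close> by force
  obtain a2 where a2: "a2 \<in> A" "edist n x2 a2 < r + e"
    using setd_lessE[OF \<open>A \<noteq> {}\<close>, of n x2 "r + e"] assms(5) \<open>0 < e\<close> by force
  have "edist n (cmb t x1 x2) (cmb t a1 a2) \<le> t * edist n x1 a1 + (1 - t) * edist n x2 a2"
    using assms(3) by (rule edist_cmb_le)
  also have "\<dots> \<le> t * (r + e) + (1 - t) * (r + e)"
    using a1 a2 assms(3) by (intro add_mono mult_left_mono) auto
  finally have "edist n (cmb t x1 x2) (cmb t a1 a2) \<le> r + e"
    by (simp add: algebra_simps)
  moreover have "setd n (cmb t a1 a2) A \<le> 1"
    using assms(1,3) a1 a2 unfolding approx_convex_def by blast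
  ultimately show "setd n (cmb t x1 x2) A \<le> r + 1 + e"
    using setd_le_edist_plus_setd[OF \<open>A \<noteq> {}\<close>, of n "cmb t x1 x2" "cmb t a1 a2"] by linarith
qed

definition barycenter :: "(nat \<Rightarrow> nat \<Rightarrow> real) \<Rightarrow> nat \<Rightarrow> nat \<Rightarrow> real" where
  "barycenter p m = (\<lambda>i. (\<Sum>t<m. p t i) / real m)"

lemma barycenter_add:
  assumes "0 < h" "0 < d"
  shows "barycenter p (h + d)
         = cmb (real h / real (h + d)) (barycenter p h) (barycenter (\<lambda>t. p (t + h)) d)"
proof
  fix i
  have split: "(\<Sum>t<h + d. p t i) = (\<Sum>t<h. p t i) + (\<Sum>t<d. p (t + h) i)"
    by (induction d) (simp_all add: ac_simps)
  have "1 - real h / real (h + d) = real d / real (h + d)"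
    using assms by (simp add: field_simps)
  then show "barycenter p (h + d) i
             = cmb (real h / real (h + d)) (barycenter p h) (barycenter (\<lambda>t. p (t + h)) d) i"
    using assms by (simp add: barycenter_def cmb_def split add_divide_distrib)
qed

lemma setd_barycenter_le:
  assumes "approx_convex n A" "A \<noteq> {}" "1 \<le> m" "m \<le> 2 ^ k" "\<forall>t<m. p t \<in> A"
  shows "setd n (barycenter p m) A \<le> real k"
  using assms(3-5)
proof (induction k arbitrary: p m)
  case 0
  then have "m = 1" by simp
  then show ?case
    using 0 setd_le_edist[of "p 0" A n "p 0"] by (simp add: barycenter_def)
next
  case (Suc k)
  show ?case
  proof (cases "m \<le> 2 ^ k")
    case True
    then show ?thesis using Suc by force
  next
    case False
    define h :: nat where "h = 2 ^ k"
    define d where "d = m - h"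
    have m: "m = h + d" and "0 < h" "0 < d" "d \<le> 2 ^ k"
      using False Suc.prems(2) by (auto simp: h_def d_def)
    have "real h / real (h + d) \<in> {0..1}"
      using \<open>0 < h\<close> by simp
    moreover have "setd n (barycenter p h) A \<le> real k"
      using Suc.IH[of h p] Suc.prems(3) m by (simp add: h_def)
    moreover have "setd n (barycenter (\<lambda>t. p (t + h)) d) A \<le> real k"
      using Suc.IH[of d "\<lambda>t. p (t + h)"] Suc.prems(3) m \<open>0 < d\<close> \<open>d \<le> 2 ^ k\<close> by simp
    ultimately have "setd n (barycenter p (h + d)) A \<le> real k + 1"
      unfolding barycenter_add[OF \<open>0 < h\<close> \<open>0 < d\<close>] by (rule setd_cmb_le[OF assms(1,2)])
    then show ?thesis
      using m by simp
  qed
qed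

definition convex_combinations :: "(nat \<Rightarrow> real) set \<Rightarrow> (nat \<Rightarrow> real) set" where
  "convex_combinations A =
     {x. \<exists>F w. finite F \<and> F \<subseteq> A \<and> (\<forall>a\<in>F. 0 \<le> w a) \<and> sum w F = 1 \<and>
              (\<forall>i. x i = (\<Sum>a\<in>F. w a * a i))}"

lemma subset_convex_combinations: "A \<subseteq> convex_combinations A"
proof
  fix x assume "x \<in> A"
  then show "x \<in> convex_combinations A"
    unfolding convex_combinations_def by (intro CollectI exI[of _ "{x}"] exI[of _ "\<lambda>_. 1"]) auto
qed

lemma convexR_convex_combinations: "convexR (convex_combinations A)"
  unfolding convexR_def
proof (intro ballI)
  fix x y t assume "x \<in> convex_combinations A" "y \<in> convex_combinations A" and t: "t \<in> {0..1::real}"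
  then obtain F1 w1 F2 w2 where
      F1: "finite F1" "F1 \<subseteq> A" "\<forall>a\<in>F1. 0 \<le> w1 a" "sum w1 F1 = 1" "\<forall>i. x i = (\<Sum>a\<in>F1. w1 a * a i)"
    and F2: "finite F2" "F2 \<subseteq> A" "\<forall>a\<in>F2. 0 \<le> w2 a" "sum w2 F2 = 1" "\<forall>i. y i = (\<Sum>a\<in>F2. w2 a * a i)"
    unfolding convex_combinations_def by blast
  define F where "F = F1 \<union> F2"
  define w where "w a = t * (if a \<in> F1 then w1 a else 0) + (1 - t) * (if a \<in> F2 then w2 a else 0)" for a
  have "finite F"
    using F1 F2 by (simp add: F_def)
  have extend: "(\<Sum>a\<in>F. if a \<in> G then g a else 0) = sum g G" if "G \<subseteq> F" for G and g :: "_ \<Rightarrow> real"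
    using sum.inter_restrict[OF \<open>finite F\<close>, of g G] that by (simp add: Int_absorb1)
  have sum_w: "(\<Sum>a\<in>F. w a * f a) = t * (\<Sum>a\<in>F1. w1 a * f a) + (1 - t) * (\<Sum>a\<in>F2. w2 a * f a)"
    for f :: "_ \<Rightarrow> real"
  proof -
    have "(\<Sum>a\<in>F. w a * f a) = (\<Sum>a\<in>F. t * (if a \<in> F1 then w1 a * f a else 0)
                                          + (1 - t) * (if a \<in> F2 then w2 a * f a else 0))"
      by (rule sum.cong) (simp_all add: w_def algebra_simps)
    also have "\<dots> = t * (\<Sum>a\<in>F1. w1 a * f a) + (1 - t) * (\<Sum>a\<in>F2. w2 a * f a)"
      using extend[of F1] extend[of F2] by (simp add: F_def sum.distrib flip: sum_distrib_left)
    finally show ?thesis .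
  qed
  have "F \<subseteq> A" "\<forall>a\<in>F. 0 \<le> w a"
    using F1 F2 t by (auto simp: F_def w_def)
  moreover have "sum w F = 1"
    using sum_w[of "\<lambda>_. 1"] F1 F2 by simp
  moreover have "\<forall>i. cmb t x y i = (\<Sum>a\<in>F. w a * a i)"
    using sum_w F1 F2 by (simp add: cmb_def)
  ultimately show "cmb t x y \<in> convex_combinations A"
    using \<open>finite F\<close> unfolding convex_combinations_def by blast
qed

lemma Co_subset_convex_combinations: "Co A \<subseteq> convex_combinations A"
  unfolding Co_def
  by (intro hull_minimal subset_convex_combinations convexR_convex_combinations)

lemma weighted_sum_centered:
  fixes w f :: "'a \<Rightarrow> real"
  assumes "sum w F = 1"
  shows "(\<Sum>a\<in>F. w a * (f a - (\<Sum>b\<in>F. w b * f b))) = 0"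
  using assms by (simp add: right_diff_distrib sum_subtractf flip: sum_distrib_right)

lemma weighted_sum_sq_shift:
  fixes w g :: "'a \<Rightarrow> real"
  assumes "sum w F = 1" "(\<Sum>a\<in>F. w a * g a) = 0"
  shows "(\<Sum>a\<in>F. w a * (s + g a)\<^sup>2) = s\<^sup>2 + (\<Sum>a\<in>F. w a * (g a)\<^sup>2)"
proof -
  have "(\<Sum>a\<in>F. w a * (s + g a)\<^sup>2) = (\<Sum>a\<in>F. s\<^sup>2 * w a + 2 * s * (w a * g a) + w a * (g a)\<^sup>2)"
    by (rule sum.cong) (simp_all add: power2_sum algebra_simps)
  also have "\<dots> = s\<^sup>2 * sum w F + 2 * s * (\<Sum>a\<in>F. w a * g a) + (\<Sum>a\<in>F. w a * (g a)\<^sup>2)"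
    by (simp add: sum.distrib sum_distrib_left)
  finally show ?thesis
    using assms by simp
qed

lemma weighted_sum_sq_pairwise:
  fixes w g :: "'a \<Rightarrow> real"
  assumes "sum w F = 1" "(\<Sum>a\<in>F. w a * g a) = 0"
  shows "(\<Sum>a\<in>F. \<Sum>b\<in>F. w a * w b * (g a - g b)\<^sup>2) = 2 * (\<Sum>a\<in>F. w a * (g a)\<^sup>2)"
proof -
  have inner: "(\<Sum>b\<in>F. w b * (g b - g a)\<^sup>2) = (g a)\<^sup>2 + (\<Sum>b\<in>F. w b * (g b)\<^sup>2)" for a
    using weighted_sum_sq_shift[OF assms, of "- g a"] by simp
  have "(\<Sum>a\<in>F. \<Sum>b\<in>F. w a * w b * (g a - g b)\<^sup>2) = (\<Sum>a\<in>F. w a * (\<Sum>b\<in>F. w b * (g b - g a)\<^sup>2))"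
    by (simp add: sum_distrib_left power2_commute mult.assoc)
  also have "\<dots> = (\<Sum>a\<in>F. w a * (g a)\<^sup>2 + w a * (\<Sum>b\<in>F. w b * (g b)\<^sup>2))"
    by (simp add: inner distrib_left)
  also have "\<dots> = 2 * (\<Sum>a\<in>F. w a * (g a)\<^sup>2)"
    using assms(1) by (simp add: sum.distrib flip: sum_distrib_right)
  finally show ?thesis .
qed

lemma weighted_sum_sq_enorm_shift:
  assumes "sum w F = 1" "\<forall>i. x i = (\<Sum>a\<in>F. w a * a i)"
  shows "(\<Sum>a\<in>F. w a * (enorm n (\<lambda>i. s i + (a i - x i)))\<^sup>2)
         = (enorm n s)\<^sup>2 + (\<Sum>a\<in>F. w a * (edist n a x)\<^sup>2)"
proof -
  have centered: "(\<Sum>a\<in>F. w a * (a i - x i)) = 0" for i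
    using weighted_sum_centered[OF assms(1), of "\<lambda>a. a i"] assms(2) by simp
  have "(\<Sum>a\<in>F. w a * (enorm n (\<lambda>i. s i + (a i - x i)))\<^sup>2)
        = (\<Sum>i<n. \<Sum>a\<in>F. w a * (s i + (a i - x i))\<^sup>2)"
    by (simp add: power2_enorm sum_distrib_left sum.swap[of _ F])
  also have "\<dots> = (\<Sum>i<n. (s i)\<^sup>2 + (\<Sum>a\<in>F. w a * (a i - x i)\<^sup>2))"
    using weighted_sum_sq_shift[OF assms(1) centered] by simp
  also have "\<dots> = (enorm n s)\<^sup>2 + (\<Sum>a\<in>F. w a * (edist n a x)\<^sup>2)"
    by (simp add: power2_enorm edist_def sum.distrib sum_distrib_left sum.swap[of _ F])
  finally show ?thesis .
qed

lemma weighted_sum_sq_edist_le: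
  assumes "\<forall>a\<in>F. 0 \<le> w a" "sum w F = 1" "\<forall>i. x i = (\<Sum>a\<in>F. w a * a i)"
    and "\<forall>a\<in>F. \<forall>b\<in>F. edist n a b \<le> D"
  shows "(\<Sum>a\<in>F. w a * (edist n a x)\<^sup>2) \<le> D\<^sup>2 / 2"
proof -
  have centered: "(\<Sum>a\<in>F. w a * (a i - x i)) = 0" for i
    using weighted_sum_centered[OF assms(2), of "\<lambda>a. a i"] assms(3) by simp
  have "2 * (\<Sum>a\<in>F. w a * (edist n a x)\<^sup>2) = (\<Sum>i<n. 2 * (\<Sum>a\<in>F. w a * (a i - x i)\<^sup>2))"
    by (simp add: power2_enorm edist_def sum_distrib_left sum.swap[of _ F])
  also have "\<dots> = (\<Sum>i<n. \<Sum>a\<in>F. \<Sum>b\<in>F. w a * w b * (a i - b i)\<^sup>2)"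
    using weighted_sum_sq_pairwise[OF assms(2) centered] by simp
  also have "\<dots> = (\<Sum>a\<in>F. \<Sum>b\<in>F. w a * w b * (edist n a b)\<^sup>2)"
    by (simp add: power2_enorm edist_def sum_distrib_left sum.swap[of _ "{..<n}"])
  also have "\<dots> \<le> (\<Sum>a\<in>F. \<Sum>b\<in>F. w a * w b * D\<^sup>2)"
    using assms(1,4) by (intro sum_mono mult_left_mono power_mono) (auto simp: edist_nonneg)
  also have "\<dots> = D\<^sup>2"
    using assms(2) by (simp flip: sum_distrib_left sum_distrib_right)
  finally show ?thesis
    by simp
qed

lemma ex_le_weighted_mean:
  fixes w f :: "'a \<Rightarrow> real"
  assumes "finite F" "\<forall>a\<in>F. 0 \<le> w a" "sum w F = 1"
  obtains a where "a \<in> F" "f a \<le> (\<Sum>b\<in>F. w b * f b)"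
proof -
  have "F \<noteq> {}"
    using assms(3) by auto
  then obtain a where a: "a \<in> F" "\<forall>b\<in>F. f a \<le> f b"
    using arg_min_if_finite[OF assms(1), of f] by (metis not_less)
  have "f a = (\<Sum>b\<in>F. w b * f a)"
    using assms(3) by (simp flip: sum_distrib_right)
  also have "\<dots> \<le> (\<Sum>b\<in>F. w b * f b)"
    using a assms(2) by (intro sum_mono mult_left_mono) auto
  finally show thesis
    using that a(1) by blast
qed

text \<open>A derandomised form of the identity \<open>E |\<Sum>t<m. X t - x|\<^sup>2 = m * Var\<close> for
  independent samples \<open>X t\<close> from the distribution \<open>w\<close> on \<open>F\<close> with mean \<open>x\<close>.\<close>

lemma ex_samples_sq_deviation_le:
  assumes "finite F" "\<forall>a\<in>F. 0 \<le> w a" "sum w F = 1" "\<forall>i. x i = (\<Sum>a\<in>F. w a * a i)"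
  shows "\<exists>p. (\<forall>t<m. p t \<in> F) \<and>
             (enorm n (\<lambda>i. \<Sum>t<m. p t i - x i))\<^sup>2 \<le> real m * (\<Sum>a\<in>F. w a * (edist n a x)\<^sup>2)"
proof (induction m)
  case 0
  show ?case
    by (simp add: enorm_def)
next
  case (Suc m)
  let ?V = "\<Sum>a\<in>F. w a * (edist n a x)\<^sup>2"
  obtain p where p: "\<forall>t<m. p t \<in> F" "(enorm n (\<lambda>i. \<Sum>t<m. p t i - x i))\<^sup>2 \<le> real m * ?V"
    using Suc.IH by blast
  define s where "s = (\<lambda>i. \<Sum>t<m. p t i - x i)"
  obtain a where a: "a \<in> F" "(enorm n (\<lambda>i. s i + (a i - x i)))\<^sup>2 \<le> (enorm n s)\<^sup>2 + ?V"
    using ex_le_weighted_mean[OF assms(1-3), of "\<lambda>a. (enorm n (\<lambda>i. s i + (a i - x i)))\<^sup>2"]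
    unfolding weighted_sum_sq_enorm_shift[OF assms(3,4)] by blast
  have "(\<lambda>i. \<Sum>t<Suc m. (p(m := a)) t i - x i) = (\<lambda>i. s i + (a i - x i))"
    by (simp add: s_def)
  moreover have "(enorm n s)\<^sup>2 \<le> real m * ?V"
    using p(2) by (simp add: s_def)
  ultimately have "(enorm n (\<lambda>i. \<Sum>t<Suc m. (p(m := a)) t i - x i))\<^sup>2 \<le> real (Suc m) * ?V"
    using a(2) by (simp add: algebra_simps)
  moreover have "\<forall>t<Suc m. (p(m := a)) t \<in> F"
    using p(1) a(1) by (simp add: less_Suc_eq)
  ultimately show ?case
    by blast
qed

lemma power2_edist_barycenter:
  assumes "0 < m"
  shows "(edist n x (barycenter p m))\<^sup>2 = (enorm n (\<lambda>i. \<Sum>t<m. p t i - x i))\<^sup>2 / (real m)\<^sup>2"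
proof -
  have "(x i - barycenter p m i)\<^sup>2 = (\<Sum>t<m. p t i - x i)\<^sup>2 / (real m)\<^sup>2" for i
    using assms by (simp add: barycenter_def sum_subtractf power2_commute field_simps)
  then show ?thesis
    by (simp add: power2_enorm edist_def sum_divide_distrib)
qed

lemma setd_Co_le:
  assumes "approx_convex n A" "A \<noteq> {}" "\<forall>a\<in>A. \<forall>b\<in>A. edist n a b \<le> D"
    and "1 \<le> j" "j \<le> 2 ^ k" "x \<in> Co A"
  shows "setd n x A \<le> real k + D / sqrt (2 * real j)"
proof -
  obtain F w where F: "finite F" "F \<subseteq> A" "\<forall>a\<in>F. 0 \<le> w a" "sum w F = 1"
      "\<forall>i. x i = (\<Sum>a\<in>F. w a * a i)"
    using subsetD[OF Co_subset_convex_combinations assms(6)] unfolding convex_combinations_def by blast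
  let ?V = "\<Sum>a\<in>F. w a * (edist n a x)\<^sup>2"
  have "\<forall>a\<in>F. \<forall>b\<in>F. edist n a b \<le> D"
    using assms(3) F(2) by blast
  then have V: "?V \<le> D\<^sup>2 / 2"
    by (rule weighted_sum_sq_edist_le[OF F(3-5)])
  obtain p where p: "\<forall>t<j. p t \<in> F" "(enorm n (\<lambda>i. \<Sum>t<j. p t i - x i))\<^sup>2 \<le> real j * ?V"
    using ex_samples_sq_deviation_le[OF F(1,3-5)] by blast
  have "\<forall>t<j. p t \<in> A"
    using p(1) F(2) by blast
  then have "setd n (barycenter p j) A \<le> real k"
    by (rule setd_barycenter_le[OF assms(1,2,4,5)])
  moreover have "edist n x (barycenter p j) \<le> D / sqrt (2 * real j)"
  proof (rule power2_le_imp_le)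
    have "(edist n x (barycenter p j))\<^sup>2 = (enorm n (\<lambda>i. \<Sum>t<j. p t i - x i))\<^sup>2 / (real j)\<^sup>2"
      using assms(4) by (intro power2_edist_barycenter) simp
    also have "\<dots> \<le> real j * (D\<^sup>2 / 2) / (real j)\<^sup>2"
      by (rule divide_right_mono[OF order_trans[OF p(2) mult_left_mono[OF V]]]) simp_all
    also have "\<dots> = (D / sqrt (2 * real j))\<^sup>2"
      using assms(4) by (simp add: power_divide power2_eq_square)
    finally show "(edist n x (barycenter p j))\<^sup>2 \<le> (D / sqrt (2 * real j))\<^sup>2" .
    obtain a where "a \<in> A"
      using assms(2) by blast
    then have "0 \<le> D"
      using assms(3) by force
    then show "0 \<le> D / sqrt (2 * real j)"
      by simp
  qed
  ultimately show ?thesis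
    using setd_le_edist_plus_setd[OF assms(2), of n x "barycenter p j"] by linarith
qed

lemma hausd_Co_le:
  assumes "0 \<le> r" "\<And>x. x \<in> Co A \<Longrightarrow> setd n x A \<le> r"
  shows "hausd n A (Co A) \<le> ereal r"
  unfolding hausd_def
proof (intro max.boundedI SUP_least)
  fix a assume "a \<in> A"
  then have "setd n a (Co A) \<le> 0"
    using setd_le_edist[of a "Co A" n a] hull_inc[of a A convexR] by (simp add: Co_def)
  then show "ereal (setd n a (Co A)) \<le> ereal r"
    using assms(1) by simp
next
  fix x assume "x \<in> Co A"
  then show "ereal (setd n x A) \<le> ereal r"
    using assms(2) by simp
qed

lemma edist_le_diam: "a \<in> A \<Longrightarrow> b \<in> A \<Longrightarrow> ereal (edist n a b) \<le> diam n A"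
  unfolding diam_def by (rule SUP_upper2[of "(a, b)"]) auto

lemma diam_nonneg:
  assumes "A \<noteq> {}"
  shows "0 \<le> diam n A"
proof -
  obtain a where "a \<in> A"
    using assms by blast
  then show ?thesis
    using edist_le_diam[of a A a n] by (simp add: zero_ereal_def)
qed

definition diam_bound :: "nat \<Rightarrow> nat \<Rightarrow> real" where
  "diam_bound n j = (log 2 (real n) - 1 - real_of_int \<lceil>log 2 (real j)\<rceil>) * sqrt (2 * real j)"

lemma le_two_power_nat_ceiling_log:
  assumes "1 \<le> j"
  shows "j \<le> 2 ^ nat \<lceil>log 2 (real j)\<rceil>"
proof -
  have "log 2 (real j) \<le> real (nat \<lceil>log 2 (real j)\<rceil>)"
    by linarith
  then have "real j \<le> 2 powr real (nat \<lceil>log 2 (real j)\<rceil>)"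
    using assms by (subst (asm) log_le_iff) auto
  then have "real j \<le> 2 ^ nat \<lceil>log 2 (real j)\<rceil>"
    by (simp add: powr_realpow)
  then show ?thesis
    by (metis of_nat_le_iff of_nat_numeral of_nat_power)
qed

lemma diam_bound_le_diam:
  assumes "approx_convex n A" "A \<noteq> {}" "ereal (log 2 (real n) - 1) \<le> hausd n A (Co A)" "1 \<le> j"
  shows "ereal (diam_bound n j) \<le> diam n A"
proof (cases "diam n A")
  case (real D)
  have D: "\<forall>a\<in>A. \<forall>b\<in>A. edist n a b \<le> D"
    using edist_le_diam[of _ A _ n] real by simp
  have "0 \<le> D"
    using diam_nonneg[OF assms(2), of n] real by simp
  define k where "k = nat \<lceil>log 2 (real j)\<rceil>"
  have k: "real k = real_of_int \<lceil>log 2 (real j)\<rceil>"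
    using assms(4) by (simp add: k_def)
  have "hausd n A (Co A) \<le> ereal (real k + D / sqrt (2 * real j))"
    using setd_Co_le[OF assms(1,2) D assms(4) le_two_power_nat_ceiling_log[OF assms(4)]] \<open>0 \<le> D\<close>
    by (intro hausd_Co_le) (simp_all add: k_def)
  with assms(3) have "ereal (log 2 (real n) - 1) \<le> ereal (real k + D / sqrt (2 * real j))"
    by (rule order_trans)
  then have "log 2 (real n) - 1 - real k \<le> D / sqrt (2 * real j)"
    by simp
  then show ?thesis
    using assms(4) real by (simp add: diam_bound_def k pos_le_divide_eq)
next
  case PInf
  then show ?thesis
    by simp
next
  case MInf
  then show ?thesis
    using diam_nonneg[OF assms(2), of n] by simp
qed

lemma scaled_bound_le_diam_bound:
  assumes "1 \<le> j" "j \<le> n"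
  shows "(log 2 (real n) - 1 - real_of_int \<lceil>log 2 (real j)\<rceil>) * sqrt (real j)
           / sqrt (real n - real j + 1) * sqrt (real n) \<le> max 0 (diam_bound n j)"
proof -
  define c where "c = log 2 (real n) - 1 - real_of_int \<lceil>log 2 (real j)\<rceil>"
  have den: "0 < real n - real j + 1"
    using assms by simp
  show ?thesis
  proof (cases "c \<le> 0")
    case True
    then have "c * sqrt (real j) / sqrt (real n - real j + 1) * sqrt (real n) \<le> 0"
      using den by (intro mult_nonpos_nonneg divide_nonpos_nonneg) auto
    then show ?thesis
      by (simp add: c_def)
  next
    case False
    then have "log 2 (real j) + 1 < log 2 (real n)"
      using le_of_int_ceiling[of "log 2 (real j)"] unfolding c_def by linarith
    then have "log 2 (2 * real j) < log 2 (real n)"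
      using assms(1) by (simp add: log_mult)
    then have "2 * real j < real n"
      using assms by (subst (asm) log_less_cancel_iff) auto
    then have "real j * (2 * real j) \<le> real j * real n"
      by (intro mult_left_mono) auto
    then have "real j * real n \<le> 2 * real j * (real n - real j + 1)"
      by (simp add: algebra_simps)
    then have "real j * real n / (real n - real j + 1) \<le> 2 * real j"
      by (simp add: pos_divide_le_eq[OF den])
    then have "sqrt (real j * real n / (real n - real j + 1)) \<le> sqrt (2 * real j)"
      by (rule real_sqrt_le_mono)
    then have "sqrt (real j) / sqrt (real n - real j + 1) * sqrt (real n) \<le> sqrt (2 * real j)"
      by (simp add: real_sqrt_mult real_sqrt_divide)
    then have "c * (sqrt (real j) / sqrt (real n - real j + 1) * sqrt (real n)) \<le> c * sqrt (2 * real j)"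
      using False by (intro mult_left_mono) auto
    then show ?thesis
      by (simp add: c_def diam_bound_def)
  qed
qed

lemma log_gap_dyadic:
  fixes n k :: nat
  assumes "2 ^ (k + 3) \<le> n" "n < 2 ^ (k + 4)"
  obtains b where "0 \<le> b" "b \<le> log 2 (real n) - 1 - real k" "0.768\<^sup>2 * real n \<le> b\<^sup>2 * 2 ^ (k + 1)"
proof -
  define P :: real where "P = 2 ^ (k + 1)"
  have "0 < P"
    by (simp add: P_def)
  have "real (2 ^ (k + 3)) \<le> real n" "real n < real (2 ^ (k + 4))"
    using assms by (simp_all only: of_nat_le_iff of_nat_less_iff)
  then have n_lower: "4 * P \<le> real n" and n_upper: "real n < 8 * P"
    by (simp_all add: P_def power_add)
  have log_ge: "y \<le> log 2 (real n)" if "2 powr y \<le> real n" for y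
    using that n_lower \<open>0 < P\<close> by (simp add: le_log_iff)
  show thesis
  proof (cases "real n < 6 * P")
    case True
    have "2 powr real (k + 3) \<le> real n"
      using n_lower by (simp add: P_def powr_realpow power_add del: of_nat_add)
    then have "2 \<le> log 2 (real n) - 1 - real k"
      using log_ge by force
    moreover have "0.768\<^sup>2 * real n \<le> 2\<^sup>2 * P"
      using True \<open>0 < P\<close> by (simp add: power2_eq_square)
    ultimately show thesis
      using that[of 2] by (simp add: P_def)
  next
    case False
    have "sqrt 2 \<le> sqrt (9 / 4)"
      by (rule real_sqrt_le_mono) simp
    then have "sqrt 2 \<le> 3 / 2"
      by (simp add: real_sqrt_divide)
    have "2 powr (real (k + 3) + 1 / 2) = 4 * sqrt 2 * P"
      unfolding powr_add by (simp add: P_def powr_realpow powr_half_sqrt power_add del: of_nat_add)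
    also have "\<dots> \<le> 4 * (3 / 2) * P"
      using \<open>sqrt 2 \<le> 3 / 2\<close> \<open>0 < P\<close> by (intro mult_right_mono mult_left_mono) auto
    also have "\<dots> \<le> real n"
      using False by simp
    finally have "5 / 2 \<le> log 2 (real n) - 1 - real k"
      using log_ge by force
    moreover have "0.768\<^sup>2 * real n \<le> (5 / 2)\<^sup>2 * P"
      using n_upper \<open>0 < P\<close> by (simp add: power2_eq_square)
    ultimately show thesis
      using that[of "5 / 2"] by (simp add: P_def)
  qed
qed

lemma ex_diam_bound_ge:
  assumes "8 \<le> n"
  obtains j where "1 \<le> j" "0.768 * sqrt (real n) \<le> diam_bound n j"
proof -
  obtain e where e: "2 ^ e \<le> n" "n < 2 ^ (e + 1)"
    using ex_power_ivl1[of 2 n] assms by auto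
  have "3 \<le> e"
  proof (rule ccontr)
    assume "\<not> 3 \<le> e"
    then have "(2::nat) ^ (e + 1) \<le> 2 ^ 3"
      by (intro power_increasing) auto
    then show False
      using e(2) assms by simp
  qed
  then obtain k where "e = k + 3"
    by (metis add.commute le_Suc_ex)
  define P :: real where "P = 2 ^ (k + 1)"
  have "2 ^ (k + 3) \<le> n" "n < 2 ^ (k + 4)"
    using e unfolding \<open>e = k + 3\<close> by (simp_all add: ac_simps)
  then obtain b where b: "0 \<le> b" "b \<le> log 2 (real n) - 1 - real k" "0.768\<^sup>2 * real n \<le> b\<^sup>2 * P"
    unfolding P_def by (rule log_gap_dyadic)
  have "(0.768 * sqrt (real n))\<^sup>2 \<le> (b * sqrt P)\<^sup>2"
    using b(3) by (simp add: P_def power_mult_distrib power_divide)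
  then have "0.768 * sqrt (real n) \<le> b * sqrt P"
    by (rule power2_le_imp_le) (use b(1) in \<open>simp add: P_def\<close>)
  also have "\<dots> \<le> (log 2 (real n) - 1 - real k) * sqrt P"
    using b(2) by (intro mult_right_mono) (auto simp: P_def)
  also have "\<dots> = diam_bound n (2 ^ k)"
    by (simp add: diam_bound_def P_def)
  finally show thesis
    using that[of "2 ^ k"] by simp
qed

lemma scaled_bound_le_diam:
  assumes "approx_convex n A" "A \<noteq> {}" "ereal (log 2 (real n) - 1) \<le> hausd n A (Co A)"
    and "1 \<le> j" "j \<le> n"
  shows "ereal ((log 2 (real n) - 1 - real_of_int \<lceil>log 2 (real j)\<rceil>) * sqrt (real j)
                / sqrt (real n - real j + 1) * sqrt (real n)) \<le> diam n A"
proof -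
  have "ereal ((log 2 (real n) - 1 - real_of_int \<lceil>log 2 (real j)\<rceil>) * sqrt (real j)
               / sqrt (real n - real j + 1) * sqrt (real n)) \<le> ereal (max 0 (diam_bound n j))"
    using scaled_bound_le_diam_bound[OF assms(4,5)] by (simp only: ereal_less_eq(3))
  also have "\<dots> \<le> diam n A"
    using diam_nonneg[OF assms(2)] diam_bound_le_diam[OF assms(1-4)] by (simp add: max_def zero_ereal_def)
  finally show ?thesis .
qed

lemma sqrt_bound_le_diam:
  assumes "approx_convex n A" "A \<noteq> {}" "ereal (log 2 (real n) - 1) \<le> hausd n A (Co A)"
    and "8 \<le> n"
  shows "ereal (0.768 * sqrt (real n)) \<le> diam n A"
proof -
  obtain j where "1 \<le> j" "0.768 * sqrt (real n) \<le> diam_bound n j"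
    using ex_diam_bound_ge[OF assms(4)] .
  then have "ereal (0.768 * sqrt (real n)) \<le> ereal (diam_bound n j)"
    by simp
  also have "\<dots> \<le> diam n A"
    by (rule diam_bound_le_diam[OF assms(1-3) \<open>1 \<le> j\<close>])
  finally show ?thesis .
qed

theorem theorem5p3:
  shows "(\<forall>n A. n \<ge> 1 \<and> A \<subseteq> Rn n \<and> A \<noteq> {} \<and> approx_convex n A \<and>
            hausd n A (Co A) \<ge> ereal (log 2 (real n) - 1) \<longrightarrow>
            (\<forall>j::nat. 1 \<le> j \<and> j \<le> n \<longrightarrow>
               diam n A \<ge> ereal ((log 2 (real n) - 1 - real_of_int \<lceil>log 2 (real j)\<rceil>) * sqrt (real j)
                                   / sqrt (real n - real j + 1) * sqrt (real n))) \<and>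
            (n \<ge> 20 \<longrightarrow> diam n A \<ge> ereal (0.7525 * sqrt (real n))))
       \<and> (\<exists>N. \<forall>n A. n \<ge> N \<and> n \<ge> 1 \<and> A \<subseteq> Rn n \<and> A \<noteq> {} \<and> approx_convex n A \<and>
            hausd n A (Co A) \<ge> ereal (log 2 (real n) - 1) \<longrightarrow>
            diam n A \<ge> ereal (0.768 * sqrt (real n)))"
proof (intro conjI allI impI exI[of _ 8])
  fix n A j
  assume "n \<ge> 1 \<and> A \<subseteq> Rn n \<and> A \<noteq> {} \<and> approx_convex n A \<and>
            hausd n A (Co A) \<ge> ereal (log 2 (real n) - 1)" "1 \<le> j \<and> j \<le> n"
  then show "ereal ((log 2 (real n) - 1 - real_of_int \<lceil>log 2 (real j)\<rceil>) * sqrt (real j)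
               / sqrt (real n - real j + 1) * sqrt (real n)) \<le> diam n A"
    by (intro scaled_bound_le_diam) auto
next
  fix n A
  assume "n \<ge> 1 \<and> A \<subseteq> Rn n \<and> A \<noteq> {} \<and> approx_convex n A \<and>
            hausd n A (Co A) \<ge> ereal (log 2 (real n) - 1)" "20 \<le> n"
  then have "ereal (0.768 * sqrt (real n)) \<le> diam n A"
    by (intro sqrt_bound_le_diam) auto
  then show "ereal (0.7525 * sqrt (real n)) \<le> diam n A"
    by (rule order_trans[rotated]) simp
next
  fix n A
  assume "8 \<le> n \<and> n \<ge> 1 \<and> A \<subseteq> Rn n \<and> A \<noteq> {} \<and> approx_convex n A \<and>
            hausd n A (Co A) \<ge> ereal (log 2 (real n) - 1)"
  then show "ereal (0.768 * sqrt (real n)) \<le> diam n A"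
    by (intro sqrt_bound_le_diam) auto
qed

end
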